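(* With the setting of the context, assume additionally that $\mathbf{x}_i^+\ne\mathbf{x}_j^-$ for all $i,j$. Let $\mathbf{s}_0\in\mathbb{R}^d$ and fix $j_0\in\{1,\dots,M^-\}$ with $U_{j_0}(\mathbf{s}_0)<0$. For $i\in\{1,\dots,M^+\}$, $j\in\{1,\dots,M^-\}$ let $$\bar\rho_{ij} := \frac{\beta_j - \|\mathbf{s}_0-\mathbf{x}_j^-\|^2 + \|\mathbf{s}_0-\mathbf{x}_i^+\|^2}{2\|\mathbf{x}_j^- - \mathbf{x}_i^+\|},\qquad \beta_j = \tfrac{1}{\gamma}\Big(\log\alpha_j^- - \log\textstyle\sum_{i=1}^{M^+}\alpha_i^+\Big),$$ and define $r_u := \min_{i}\bar\rho_{i j_0}$ and $r_u^* := \min_{i}\max_{j}\bar\rho_{ij}$ (with $i$ ranging over $\{1,\dots,M^+\}$ and $j$ over $\{1,\dots,M^-\}$). Then $r_u\le r_u^*$, and every point $\mathbf{y}\in\mathbb{R}^d$ with $\|\mathbf{y}-\mathbf{s}_0\|<r_u^*$ (in particular every $\mathbf{y}$ with $\|\mathbf{y}-\mathbf{s}_0\|<r_u$) satisfies $F(\mathbf{y})<0$.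
   Context: Let $M^+, M^- \ge 1$; positive support vectors $\mathbf{x}_1^+,\dots,\mathbf{x}_{M^+}^+\in\mathbb{R}^d$ with weights $\alpha_i^+>0$; negative support vectors $\mathbf{x}_1^-,\dots,\mathbf{x}_{M^-}^-\in\mathbb{R}^d$ with weights $\alpha_j^->0$. Kernel: $k(\mathbf{x},\mathbf{y}) = \eta \exp(-\gamma\|\mathbf{x}-\mathbf{y}\|^2)$ with constants $\eta,\gamma>0$, Euclidean norm. Score function: $F(\mathbf{x}) = \sum_{i=1}^{M^+}\alpha_i^+ k(\mathbf{x}_i^+,\mathbf{x}) - \sum_{j=1}^{M^-}\alpha_j^- k(\mathbf{x}_j^-,\mathbf{x})$. $\mathbf{x}_*^+(\mathbf{x})$ denotes a positive support vector closest to $\mathbf{x}$. For $j\in\{1,\dots,M^-\}$, $U_j(\mathbf{x}) := k(\mathbf{x},\mathbf{x}_*^+(\mathbf{x}))\sum_{i=1}^{M^+}\alpha_i^+ - \alpha_j^- k(\mathbf{x},\mathbf{x}_j^-)$. A point $\mathbf{x}$ is free if $F(\mathbf{x})<0$. *)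

theory Defs
  imports "HOL-Analysis.Analysis"
begin

definition kern :: "real \<Rightarrow> real \<Rightarrow> 'a::real_normed_vector \<Rightarrow> 'a \<Rightarrow> real" where
  "kern eta gamma x y = eta * exp (- gamma * (norm (x - y))\<^sup>2)"

definition score :: "real \<Rightarrow> real \<Rightarrow> nat \<Rightarrow> (nat \<Rightarrow> 'a::real_normed_vector) \<Rightarrow> (nat \<Rightarrow> real)
    \<Rightarrow> nat \<Rightarrow> (nat \<Rightarrow> 'a) \<Rightarrow> (nat \<Rightarrow> real) \<Rightarrow> 'a \<Rightarrow> real" where
  "score eta gamma Mp xp ap Mn xn an x =
     (\<Sum>i=1..Mp. ap i * kern eta gamma (xp i) x) - (\<Sum>j=1..Mn. an j * kern eta gamma (xn j) x)"

definition closest_pos :: "nat \<Rightarrow> (nat \<Rightarrow> 'a::real_normed_vector) \<Rightarrow> 'a \<Rightarrow> 'a" where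
  "closest_pos Mp xp x = xp (SOME i. i \<in> {1..Mp} \<and> (\<forall>i'\<in>{1..Mp}. norm (x - xp i) \<le> norm (x - xp i')))"

definition Ufun :: "real \<Rightarrow> real \<Rightarrow> nat \<Rightarrow> (nat \<Rightarrow> 'a::real_normed_vector) \<Rightarrow> (nat \<Rightarrow> real)
    \<Rightarrow> (nat \<Rightarrow> 'a) \<Rightarrow> (nat \<Rightarrow> real) \<Rightarrow> nat \<Rightarrow> 'a \<Rightarrow> real" where
  "Ufun eta gamma Mp xp ap xn an j x =
     kern eta gamma x (closest_pos Mp xp x) * (\<Sum>i=1..Mp. ap i) - an j * kern eta gamma x (xn j)"

definition beta :: "real \<Rightarrow> nat \<Rightarrow> (nat \<Rightarrow> real) \<Rightarrow> (nat \<Rightarrow> real) \<Rightarrow> nat \<Rightarrow> real" where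
  "beta gamma Mp ap an j = (1 / gamma) * (ln (an j) - ln (\<Sum>i=1..Mp. ap i))"

definition rho_bar :: "real \<Rightarrow> nat \<Rightarrow> (nat \<Rightarrow> 'a::real_normed_vector) \<Rightarrow> (nat \<Rightarrow> real)
    \<Rightarrow> (nat \<Rightarrow> 'a) \<Rightarrow> (nat \<Rightarrow> real) \<Rightarrow> 'a \<Rightarrow> nat \<Rightarrow> nat \<Rightarrow> real" where
  "rho_bar gamma Mp xp ap xn an s0 i j =
     (beta gamma Mp ap an j - (norm (s0 - xn j))\<^sup>2 + (norm (s0 - xp i))\<^sup>2) / (2 * norm (xn j - xp i))"

end

theory Submission
  imports Defs
begin

text \<open>Fix the positive support vector \<open>x\<^sub>i\<^sup>+\<close> closest to \<open>y\<close>. Every positive kernel value at \<open>y\<close>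
  is then at most \<open>k(x\<^sub>i\<^sup>+, y)\<close>, so \<open>F(y) < 0\<close> as soon as a single negative term
  \<open>\<alpha>\<^sub>j\<^sup>- k(x\<^sub>j\<^sup>-, y)\<close> exceeds \<open>(\<Sum>\<alpha>\<^sup>+) k(x\<^sub>i\<^sup>+, y)\<close>. Taking logarithms, this is the linear
  condition \<open>\<parallel>y - x\<^sub>j\<^sup>-\<parallel>\<^sup>2 - \<parallel>y - x\<^sub>i\<^sup>+\<parallel>\<^sup>2 < \<beta>\<^sub>j\<close> in \<open>y\<close>; expanding around \<open>s\<^sub>0\<close> and
  applying Cauchy-Schwarz shows that it holds whenever \<open>\<parallel>y - s\<^sub>0\<parallel> < \<rho>\<^sub>i\<^sub>j\<close>. Choosing \<open>j\<close>
  maximising \<open>\<rho>\<^sub>i\<^sub>j\<close> gives the radius \<open>r\<^sub>u\<^sup>*\<close>.\<close>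

lemma norm_diff_sq_diff_shift:
  fixes y s a b :: "'a::real_inner"
  shows "(norm (y - b))\<^sup>2 - (norm (y - a))\<^sup>2
           = (norm (s - b))\<^sup>2 - (norm (s - a))\<^sup>2 + 2 * inner (y - s) (a - b)"
  by (simp add: power2_norm_eq_inner inner_diff_left inner_diff_right inner_commute algebra_simps)

lemma norm_diff_sq_diff_less_if_near:
  fixes y s a b :: "'a::real_inner" and t :: real
  assumes "a \<noteq> b"
    and "norm (y - s) < (t - (norm (s - b))\<^sup>2 + (norm (s - a))\<^sup>2) / (2 * norm (b - a))"
  shows "(norm (y - b))\<^sup>2 - (norm (y - a))\<^sup>2 < t"
proof -
  have "norm (b - a) > 0" using assms(1) by simp
  then have near: "2 * (norm (y - s) * norm (b - a)) < t - (norm (s - b))\<^sup>2 + (norm (s - a))\<^sup>2"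
    using assms(2) by (simp add: pos_less_divide_eq mult_ac)
  have "inner (y - s) (a - b) \<le> norm (y - s) * norm (b - a)"
    using norm_cauchy_schwarz[of "y - s" "a - b"] by (simp add: norm_minus_commute)
  with near show ?thesis using norm_diff_sq_diff_shift[of y b a s] by linarith
qed

lemma weighted_kern_less_iff:
  fixes a b y :: "'a::real_normed_vector"
  assumes "eta > 0" "gamma > 0" "A > 0" "c > 0"
  shows "A * kern eta gamma a y < c * kern eta gamma b y
           \<longleftrightarrow> (norm (y - b))\<^sup>2 - (norm (y - a))\<^sup>2 < (1 / gamma) * (ln c - ln A)"
proof -
  have weighted: "w * kern eta gamma x y = eta * exp (ln w - gamma * (norm (y - x))\<^sup>2)"
    if "w > 0" for w and x :: 'a
    using that by (simp add: kern_def exp_diff exp_minus norm_minus_commute field_simps)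
  have "A * kern eta gamma a y < c * kern eta gamma b y
          \<longleftrightarrow> exp (ln A - gamma * (norm (y - a))\<^sup>2) < exp (ln c - gamma * (norm (y - b))\<^sup>2)"
    using assms by (simp add: weighted)
  also have "\<dots> \<longleftrightarrow> gamma * ((norm (y - b))\<^sup>2 - (norm (y - a))\<^sup>2) < ln c - ln A"
    by (simp add: algebra_simps)
  also have "\<dots> \<longleftrightarrow> (norm (y - b))\<^sup>2 - (norm (y - a))\<^sup>2 < (1 / gamma) * (ln c - ln A)"
    using assms(2) by (simp add: field_simps)
  finally show ?thesis .
qed

lemma kern_antimono:
  assumes "eta \<ge> 0" "gamma \<ge> 0" "norm (a - y) \<le> norm (b - y)"
  shows "kern eta gamma b y \<le> kern eta gamma a y"
proof -
  have "gamma * (norm (a - y))\<^sup>2 \<le> gamma * (norm (b - y))\<^sup>2"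
    using assms(2,3) by (intro mult_left_mono power_mono) auto
  then show ?thesis using assms(1) unfolding kern_def by (intro mult_left_mono) auto
qed

lemma score_neg_if_closest_dominated:
  assumes "eta > 0" "gamma > 0"
    and "\<forall>i\<in>{1..Mp}. ap i > 0" "\<forall>j\<in>{1..Mn}. an j > 0"
    and "i \<in> {1..Mp}" "\<forall>i'\<in>{1..Mp}. norm (xp i - y) \<le> norm (xp i' - y)"
    and "j \<in> {1..Mn}"
    and "(\<Sum>i'=1..Mp. ap i') * kern eta gamma (xp i) y < an j * kern eta gamma (xn j) y"
  shows "score eta gamma Mp xp ap Mn xn an y < 0"
proof -
  have "(\<Sum>i'=1..Mp. ap i' * kern eta gamma (xp i') y) \<le> (\<Sum>i'=1..Mp. ap i' * kern eta gamma (xp i) y)"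
    using assms(1-3,6) by (intro sum_mono mult_left_mono kern_antimono) (auto simp: less_imp_le)
  also have "\<dots> = (\<Sum>i'=1..Mp. ap i') * kern eta gamma (xp i) y"
    by (simp add: sum_distrib_right)
  also have "\<dots> < an j * kern eta gamma (xn j) y" by (fact assms(8))
  also have "\<dots> \<le> (\<Sum>j'=1..Mn. an j' * kern eta gamma (xn j') y)"
    using assms(1,4,7) by (intro member_le_sum) (auto simp: kern_def less_imp_le)
  finally show ?thesis by (simp add: score_def)
qed

lemma score_neg_if_near:
  fixes xp xn :: "nat \<Rightarrow> 'a::real_inner"
  assumes "eta > 0" "gamma > 0" "Mp \<ge> 1"
    and "\<forall>i\<in>{1..Mp}. ap i > 0" "\<forall>j\<in>{1..Mn}. an j > 0"
    and "\<forall>i\<in>{1..Mp}. \<forall>j\<in>{1..Mn}. xp i \<noteq> xn j"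
    and near: "\<forall>i\<in>{1..Mp}. \<exists>j\<in>{1..Mn}. norm (y - s0) < rho_bar gamma Mp xp ap xn an s0 i j"
  shows "score eta gamma Mp xp ap Mn xn an y < 0"
proof -
  obtain i where i: "i \<in> {1..Mp}" "\<forall>i'\<in>{1..Mp}. norm (xp i - y) \<le> norm (xp i' - y)"
    using ex_is_arg_min_if_finite[of "{1..Mp}" "\<lambda>i. norm (xp i - y)"] assms(3)
    by (force simp: is_arg_min_linorder)
  with near obtain j where j: "j \<in> {1..Mn}" "norm (y - s0) < rho_bar gamma Mp xp ap xn an s0 i j"
    by blast
  have "(\<Sum>i'=1..Mp. ap i') > 0" using assms(3,4) by (intro sum_pos) auto
  moreover have "(norm (y - xn j))\<^sup>2 - (norm (y - xp i))\<^sup>2 < beta gamma Mp ap an j"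
    using norm_diff_sq_diff_less_if_near[of "xp i" "xn j" y s0] assms(6) i(1) j
    by (auto simp: rho_bar_def)
  ultimately have "(\<Sum>i'=1..Mp. ap i') * kern eta gamma (xp i) y < an j * kern eta gamma (xn j) y"
    using weighted_kern_less_iff[of eta gamma "\<Sum>i'=1..Mp. ap i'" "an j" "xp i" y "xn j"]
      assms(1,2,5) j(1) by (simp add: beta_def)
  then show ?thesis using score_neg_if_closest_dominated assms(1,2,4,5) i j(1) by blast
qed

lemma Min_le_Min_Max:
  fixes g :: "'i \<Rightarrow> 'j \<Rightarrow> 'b::linorder"
  assumes "finite I" "I \<noteq> {}" "finite J" "j0 \<in> J"
  shows "Min ((\<lambda>i. g i j0) ` I) \<le> Min ((\<lambda>i. Max (g i ` J)) ` I)"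
proof -
  have "Min ((\<lambda>i. Max (g i ` J)) ` I) \<in> (\<lambda>i. Max (g i ` J)) ` I"
    using assms(1,2) by (intro Min_in) auto
  then obtain i where i: "i \<in> I" "Min ((\<lambda>i. Max (g i ` J)) ` I) = Max (g i ` J)"
    by blast
  have "Min ((\<lambda>i. g i j0) ` I) \<le> g i j0" using assms(1) i(1) by simp
  also have "\<dots> \<le> Max (g i ` J)" using assms(3,4) by simp
  finally show ?thesis using i(2) by simp
qed

lemma less_Min_Max_imp_ex:
  fixes g :: "'i \<Rightarrow> 'j \<Rightarrow> 'b::linorder"
  assumes "finite I" "finite J" "J \<noteq> {}" "r < Min ((\<lambda>i. Max (g i ` J)) ` I)"
  shows "\<forall>i\<in>I. \<exists>j\<in>J. r < g i j"
proof
  fix i assume "i \<in> I"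
  then have "r < Max (g i ` J)" using assms(1,4) Min_le[of "(\<lambda>i. Max (g i ` J)) ` I"]
    by (meson finite_imageI image_eqI order_less_le_trans)
  then show "\<exists>j\<in>J. r < g i j" using assms(2,3) by (simp add: Max_gr_iff)
qed

theorem corollary2:
  fixes eta gamma :: real and Mp Mn :: nat
    and xp xn :: "nat \<Rightarrow> 'a::euclidean_space" and ap an :: "nat \<Rightarrow> real"
    and s0 :: 'a and j0 :: nat
  assumes "eta > 0" and "gamma > 0" and "Mp \<ge> 1" and "Mn \<ge> 1"
    and "\<forall>i\<in>{1..Mp}. ap i > 0" and "\<forall>j\<in>{1..Mn}. an j > 0"
    and "\<forall>i\<in>{1..Mp}. \<forall>j\<in>{1..Mn}. xp i \<noteq> xn j"
    and "j0 \<in> {1..Mn}"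
    and "Ufun eta gamma Mp xp ap xn an j0 s0 < 0"
  shows "Min ((\<lambda>i. rho_bar gamma Mp xp ap xn an s0 i j0) ` {1..Mp})
           \<le> Min ((\<lambda>i. Max ((\<lambda>j. rho_bar gamma Mp xp ap xn an s0 i j) ` {1..Mn})) ` {1..Mp})
       \<and> (\<forall>y. norm (y - s0) < Min ((\<lambda>i. Max ((\<lambda>j. rho_bar gamma Mp xp ap xn an s0 i j) ` {1..Mn})) ` {1..Mp})
              \<longrightarrow> score eta gamma Mp xp ap Mn xn an y < 0)
       \<and> (\<forall>y. norm (y - s0) < Min ((\<lambda>i. rho_bar gamma Mp xp ap xn an s0 i j0) ` {1..Mp})
              \<longrightarrow> score eta gamma Mp xp ap Mn xn an y < 0)"
proof -
  let ?\<rho> = "rho_bar gamma Mp xp ap xn an s0"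
  have ru_le: "Min ((\<lambda>i. ?\<rho> i j0) ` {1..Mp}) \<le> Min ((\<lambda>i. Max (?\<rho> i ` {1..Mn})) ` {1..Mp})"
    using assms(3,8) by (intro Min_le_Min_Max) auto
  have free: "score eta gamma Mp xp ap Mn xn an y < 0"
    if "norm (y - s0) < Min ((\<lambda>i. Max (?\<rho> i ` {1..Mn})) ` {1..Mp})" for y
    using assms(1-7) less_Min_Max_imp_ex[OF _ _ _ that]
    by (intro score_neg_if_near) auto
  show ?thesis using ru_le free by force
qed

end
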